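(* For any set of rule schemes $\mathcal{R}\subseteq\{N,H,P,F,wF\}$: if $\mathbf{STL}(\mathcal{R})\vdash\Gamma\Rightarrow A$ then $\mathbf{ST}(\mathcal{R})\vDash\Gamma\Rightarrow A$; and if $\Gamma\vdash_{i\mathbf{STL}(\mathcal{R})}A$ then $i\mathbf{ST}(\mathcal{R})\vDash\Gamma\Rightarrow A$.
   Context: Formulas of $\mathcal{L}_\nabla$ are built from propositional variables and constants $1,\top,\bot$ by binary $\wedge,\vee,\otimes,\to$ and unary $\nabla$. A sequent is $\Gamma\Rightarrow A$ with $\Gamma$ a finite (possibly empty) sequence of formulas; $\nabla\Gamma$ applies $\nabla$ to each member. $\mathbf{STL}$ has axioms $A\Rightarrow A$, $\Rightarrow1$, $\nabla1\Rightarrow1$, $\Gamma\Rightarrow\top$, $\Gamma,\bot,\Sigma\Rightarrow A$ and rules (premises / conclusion): cut: $\Gamma\Rightarrow A$ and $\Pi,A,\Sigma\Rightarrow B$ / $\Pi,\Gamma,\Sigma\Rightarrow B$; $L\wedge$: $\Gamma,A,\Sigma\Rightarrow C$ / $\Gamma,A\wedge B,\Sigma\Rightarrow C$ and $\Gamma,B,\Sigma\Rightarrow C$ / $\Gamma,A\wedge B,\Sigma\Rightarrow C$; $R\wedge$: $\Gamma\Rightarrow A$ and $\Gamma\Rightarrow B$ / $\Gamma\Rightarrow A\wedge B$; $L\vee$: $\Gamma,A,\Sigma\Rightarrow C$ and $\Gamma,B,\Sigma\Rightarrow C$ / $\Gamma,A\vee B,\Sigma\Rightarrow C$; $R\vee$: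 $\Gamma\Rightarrow A$ / $\Gamma\Rightarrow A\vee B$ and $\Gamma\Rightarrow B$ / $\Gamma\Rightarrow A\vee B$; $L1$: $\Gamma,\Sigma\Rightarrow A$ / $\Gamma,1,\Sigma\Rightarrow A$; $L\otimes$: $\Gamma,A,B,\Sigma\Rightarrow C$ / $\Gamma,A\otimes B,\Sigma\Rightarrow C$; $R\otimes$: $\Gamma\Rightarrow A$ and $\Sigma\Rightarrow B$ / $\Gamma,\Sigma\Rightarrow A\otimes B$; $(\nabla)$: $A\Rightarrow B$ / $\nabla A\Rightarrow\nabla B$; Oplax: $\nabla A,\nabla B\Rightarrow C$ / $\nabla(A\otimes B)\Rightarrow C$; $L\to$: $\Gamma\Rightarrow A$ and $\Pi,B,\Sigma\Rightarrow C$ / $\Pi,\Gamma,\nabla(A\to B),\Sigma\Rightarrow C$; $R\to$: $A,\nabla\Gamma\Rightarrow B$ / $\Gamma\Rightarrow A\to B$. Rule schemes: $(N)$: $\Gamma\Rightarrow A$ / $\nabla\Gamma\Rightarrow\nabla A$; $(P)$: $\Gamma\Rightarrow\nabla A$ / $\Gamma\Rightarrow A$; $(F)$: $\Gamma\Rightarrow A$ / $\Gamma\Rightarrow\nabla A$; $(wF)$: $\nabla A\Rightarrow\bot$ / $A\Rightarrow\bot$; $(H)$: $\Gamma,A_1\to B_1,\dots,A_n\to B_n\Rightarrow C$ / $\nabla\Gamma,\nabla A_1\to\nabla B_1,\dots,\nabla A_n\to\nabla B_n\Rightarrow\nabla C$ ($n\ge0$). Structural rules: weakening $\Gamma,\Sigma\Rightarrow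 B$ / $\Gamma,A,\Sigma\Rightarrow B$; contraction $\Gamma,A,A,\Sigma\Rightarrow B$ / $\Gamma,A,\Sigma\Rightarrow B$; exchange $\Gamma,A,B,\Sigma\Rightarrow C$ / $\Gamma,B,A,\Sigma\Rightarrow C$. $\mathbf{STL}(\mathcal{R})$ is $\mathbf{STL}$ plus the schemes in $\mathcal{R}$; $i\mathbf{STL}(\mathcal{R})$ is $\mathbf{STL}(\mathcal{R})$ plus the structural rules; $\Gamma\vdash_L A$ means $L$ derives $\Gamma\Rightarrow A$. Semantics: a quantale is a monoidal poset (monoid with multiplication monotone in each argument) with all joins over which multiplication distributes; a locale is a quantale whose multiplication is binary meet with unit the top. A non-commutative spacetime is $\mathcal{S}=(\mathscr{X},\nabla)$ with $\mathscr{X}$ a quantale, $\nabla$ join preserving and oplax monoidal ($\nabla e\le e$, $\nabla(a\otimes b)\le\nabla a\otimes\nabla b$); a spacetime is one where $\mathscr{X}$ is a locale. Its implication $\to_{\mathcal{S}}$ is characterized by $a\otimes\nabla b\le c$ iff $b\le a\to_{\mathcal{S}}c$. A valuation $V$ maps formulas to $\mathscr{X}$ with $V(1)=e$, $V(\bot)=$ bottom, $V(\top)=$ top, and $V$ commuting with $\wedge,\vee,\otimes,\nabla,\to$ (interpreted by meet, join, $\otimes$, $\nabla$, $\to_{\mathcal{S}}$). $(\mathcal{S},V)\vDash\gamma_1,\dots,\gamma_n\Rightarrow A$ iff $V(\gamma_1)\otimes\cdots\otimes V(\gamma_n)\le V(A)$ (empty product $=e$); $\mathcal{S}\vDash$ means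 for all $V$; a class $\vDash$ means for every member. $\mathcal{S}$ satisfies $(N)$ if $\nabla e=e$ and $\nabla(a\otimes b)=\nabla a\otimes\nabla b$; $(H)$ if $\nabla$ preserves all the structure including the implication; $(P)$ if $\nabla a\le a$; $(F)$ if $a\le\nabla a$; $(wF)$ if $\nabla a=0$ implies $a=0$. $\mathbf{ST}(\mathcal{R})$ is the class of non-commutative spacetimes satisfying all schemes in $\mathcal{R}$, and $i\mathbf{ST}(\mathcal{R})$ the class of spacetimes satisfying them. *)

theory Defs
  imports Main
begin

datatype fm =
    Var nat
  | One
  | TT
  | FF
  | Conj fm fm
  | Disj fm fm
  | Tens fm fm
  | Imp fm fm
  | Nab fm

datatype scheme = SN | SH | SP | SF | SwF

text \<open>deriv R i G A: the sequent G => A is derivable in STL(R) (i = False)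
  or in iSTL(R) (i = True, structural rules added).\<close>

inductive deriv :: "scheme set \<Rightarrow> bool \<Rightarrow> fm list \<Rightarrow> fm \<Rightarrow> bool" for R :: "scheme set" and i :: bool where
  ax_id: "deriv R i [A] A"
| ax_one: "deriv R i [] One"
| ax_nabone: "deriv R i [Nab One] One"
| ax_top: "deriv R i G TT"
| ax_bot: "deriv R i (G @ [FF] @ S) A"
| cut: "deriv R i G A \<Longrightarrow> deriv R i (P @ [A] @ S) B \<Longrightarrow> deriv R i (P @ G @ S) B"
| L_conj1: "deriv R i (G @ [A] @ S) C \<Longrightarrow> deriv R i (G @ [Conj A B] @ S) C"
| L_conj2: "deriv R i (G @ [B] @ S) C \<Longrightarrow> deriv R i (G @ [Conj A B] @ S) C"
| R_conj: "deriv R i G A \<Longrightarrow> deriv R i G B \<Longrightarrow> deriv R i G (Conj A B)"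
| L_disj: "deriv R i (G @ [A] @ S) C \<Longrightarrow> deriv R i (G @ [B] @ S) C \<Longrightarrow> deriv R i (G @ [Disj A B] @ S) C"
| R_disj1: "deriv R i G A \<Longrightarrow> deriv R i G (Disj A B)"
| R_disj2: "deriv R i G B \<Longrightarrow> deriv R i G (Disj A B)"
| L_one: "deriv R i (G @ S) A \<Longrightarrow> deriv R i (G @ [One] @ S) A"
| L_tens: "deriv R i (G @ [A, B] @ S) C \<Longrightarrow> deriv R i (G @ [Tens A B] @ S) C"
| R_tens: "deriv R i G A \<Longrightarrow> deriv R i S B \<Longrightarrow> deriv R i (G @ S) (Tens A B)"
| nab: "deriv R i [A] B \<Longrightarrow> deriv R i [Nab A] (Nab B)"
| oplax: "deriv R i [Nab A, Nab B] C \<Longrightarrow> deriv R i [Nab (Tens A B)] C"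
| L_imp: "deriv R i G A \<Longrightarrow> deriv R i (P @ [B] @ S) C \<Longrightarrow>
            deriv R i (P @ G @ [Nab (Imp A B)] @ S) C"
| R_imp: "deriv R i (A # map Nab G) B \<Longrightarrow> deriv R i G (Imp A B)"
| rN: "SN \<in> R \<Longrightarrow> deriv R i G A \<Longrightarrow> deriv R i (map Nab G) (Nab A)"
| rP: "SP \<in> R \<Longrightarrow> deriv R i G (Nab A) \<Longrightarrow> deriv R i G A"
| rF: "SF \<in> R \<Longrightarrow> deriv R i G A \<Longrightarrow> deriv R i G (Nab A)"
| rwF: "SwF \<in> R \<Longrightarrow> deriv R i [Nab A] FF \<Longrightarrow> deriv R i [A] FF"
| rH: "SH \<in> R \<Longrightarrow> deriv R i (G @ map (\<lambda>(a, b). Imp a b) ps) C \<Longrightarrow>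
        deriv R i (map Nab G @ map (\<lambda>(a, b). Imp (Nab a) (Nab b)) ps) (Nab C)"
| weak: "i \<Longrightarrow> deriv R i (G @ S) B \<Longrightarrow> deriv R i (G @ [A] @ S) B"
| contr: "i \<Longrightarrow> deriv R i (G @ [A, A] @ S) B \<Longrightarrow> deriv R i (G @ [A] @ S) B"
| exch: "i \<Longrightarrow> deriv R i (G @ [A, B] @ S) C \<Longrightarrow> deriv R i (G @ [B, A] @ S) C"

record 'a nst =
  tmul :: "'a \<Rightarrow> 'a \<Rightarrow> 'a"
  tunit :: 'a
  tnab :: "'a \<Rightarrow> 'a"

definition quantale :: "('a::complete_lattice) nst \<Rightarrow> bool" where
  "quantale S \<longleftrightarrow>
     (\<forall>a b c. tmul S (tmul S a b) c = tmul S a (tmul S b c)) \<and>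
     (\<forall>a. tmul S (tunit S) a = a \<and> tmul S a (tunit S) = a) \<and>
     (\<forall>a b c. a \<le> b \<longrightarrow> tmul S a c \<le> tmul S b c \<and> tmul S c a \<le> tmul S c b) \<and>
     (\<forall>a X. tmul S a (Sup X) = Sup ((\<lambda>x. tmul S a x) ` X)) \<and>
     (\<forall>X a. tmul S (Sup X) a = Sup ((\<lambda>x. tmul S x a) ` X))"

definition locale_q :: "('a::complete_lattice) nst \<Rightarrow> bool" where
  "locale_q S \<longleftrightarrow> quantale S \<and> (\<forall>a b. tmul S a b = inf a b) \<and> tunit S = top"

definition nc_spacetime :: "('a::complete_lattice) nst \<Rightarrow> bool" where
  "nc_spacetime S \<longleftrightarrow> quantale S \<and>
     (\<forall>X. tnab S (Sup X) = Sup (tnab S ` X)) \<and>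
     tnab S (tunit S) \<le> tunit S \<and>
     (\<forall>a b. tnab S (tmul S a b) \<le> tmul S (tnab S a) (tnab S b))"

definition spacetime :: "('a::complete_lattice) nst \<Rightarrow> bool" where
  "spacetime S \<longleftrightarrow> nc_spacetime S \<and> locale_q S"

text \<open>The implication: right adjoint, a * nab b <= c iff b <= a -> c.
  Since nab preserves joins it exists and equals the following join.\<close>

definition st_imp :: "('a::complete_lattice) nst \<Rightarrow> 'a \<Rightarrow> 'a \<Rightarrow> 'a" where
  "st_imp S a c = Sup {b. tmul S a (tnab S b) \<le> c}"

fun eval :: "('a::complete_lattice) nst \<Rightarrow> (nat \<Rightarrow> 'a) \<Rightarrow> fm \<Rightarrow> 'a" where
  "eval S v (Var p) = v p"
| "eval S v One = tunit S"
| "eval S v TT = top"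
| "eval S v FF = bot"
| "eval S v (Conj A B) = inf (eval S v A) (eval S v B)"
| "eval S v (Disj A B) = sup (eval S v A) (eval S v B)"
| "eval S v (Tens A B) = tmul S (eval S v A) (eval S v B)"
| "eval S v (Imp A B) = st_imp S (eval S v A) (eval S v B)"
| "eval S v (Nab A) = tnab S (eval S v A)"

definition models :: "('a::complete_lattice) nst \<Rightarrow> fm list \<Rightarrow> fm \<Rightarrow> bool" where
  "models S G A \<longleftrightarrow>
     (\<forall>v. foldr (tmul S) (map (eval S v) G) (tunit S) \<le> eval S v A)"

fun sat :: "scheme \<Rightarrow> ('a::complete_lattice) nst \<Rightarrow> bool" where
  "sat SN S \<longleftrightarrow> tnab S (tunit S) = tunit S \<and>
                 (\<forall>a b. tnab S (tmul S a b) = tmul S (tnab S a) (tnab S b))"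
| "sat SH S \<longleftrightarrow> tnab S (tunit S) = tunit S \<and>
                 (\<forall>a b. tnab S (tmul S a b) = tmul S (tnab S a) (tnab S b)) \<and>
                 (\<forall>X. tnab S (Sup X) = Sup (tnab S ` X)) \<and>
                 tnab S top = top \<and> tnab S bot = bot \<and>
                 (\<forall>a b. tnab S (inf a b) = inf (tnab S a) (tnab S b)) \<and>
                 (\<forall>a b. tnab S (sup a b) = sup (tnab S a) (tnab S b)) \<and>
                 (\<forall>a b. tnab S (st_imp S a b) = st_imp S (tnab S a) (tnab S b))"
| "sat SP S \<longleftrightarrow> (\<forall>a. tnab S a \<le> a)"
| "sat SF S \<longleftrightarrow> (\<forall>a. a \<le> tnab S a)"
| "sat SwF S \<longleftrightarrow> (\<forall>a. tnab S a = bot \<longrightarrow> a = bot)"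

definition ST :: "scheme set \<Rightarrow> ('a::complete_lattice) nst set" where
  "ST R = {S. nc_spacetime S \<and> (\<forall>r\<in>R. sat r S)}"

definition iST :: "scheme set \<Rightarrow> ('a::complete_lattice) nst set" where
  "iST R = {S. spacetime S \<and> (\<forall>r\<in>R. sat r S)}"

end

theory Submission
  imports Defs
begin

text \<open>Soundness is proved by induction on derivations, reading a sequent
  \<open>\<gamma>\<^sub>1, \<dots>, \<gamma>\<^sub>n \<Rightarrow> A\<close> as the inequality \<open>V \<gamma>\<^sub>1 \<otimes> \<dots> \<otimes> V \<gamma>\<^sub>n \<le> V A\<close>. The
  logical rules hold because multiplication is monotone and distributes over
  joins, \<open>L\<rightarrow>\<close> and \<open>R\<rightarrow>\<close> are the two halves of the adjunction defining the
  implication, and \<open>R\<rightarrow>\<close> and Oplax also use that \<open>\<nabla>\<close> is oplax monoidal. Each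
  scheme in \<open>\<R>\<close> is sound under its semantic condition; the structural
  rules are sound in locales because there the product of a context is the meet
  of its members.\<close>

definition tprod :: "('a::complete_lattice) nst \<Rightarrow> 'a list \<Rightarrow> 'a" where
  "tprod S xs = foldr (tmul S) xs (tunit S)"

lemma tprod_Nil [simp]: "tprod S [] = tunit S"
  by (simp add: tprod_def)

lemma tprod_Cons [simp]: "tprod S (x # xs) = tmul S x (tprod S xs)"
  by (simp add: tprod_def)

lemma tprod_eq_Inf_set:
  assumes "locale_q S"
  shows "tprod S xs = Inf (set xs)"
  using assms by (induction xs) (simp_all add: locale_q_def)

locale noncomm_spacetime =
  fixes S :: "('a::complete_lattice) nst"
  assumes nc_spacetime: "nc_spacetime S"
begin

lemma quantale: "quantale S"
  using nc_spacetime by (simp add: nc_spacetime_def)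

lemma tmul_assoc: "tmul S (tmul S a b) c = tmul S a (tmul S b c)"
  using quantale by (simp add: quantale_def)

lemma tmul_unit_left [simp]: "tmul S (tunit S) a = a"
  using quantale by (simp add: quantale_def)

lemma tmul_unit_right [simp]: "tmul S a (tunit S) = a"
  using quantale by (simp add: quantale_def)

lemma tmul_mono: "a \<le> b \<Longrightarrow> c \<le> d \<Longrightarrow> tmul S a c \<le> tmul S b d"
  using quantale unfolding quantale_def by (meson order_trans)

lemma tmul_Sup_right: "tmul S a (Sup X) = Sup (tmul S a ` X)"
  using quantale by (simp add: quantale_def)

lemma tmul_Sup_left: "tmul S (Sup X) a = Sup ((\<lambda>x. tmul S x a) ` X)"
  using quantale by (simp add: quantale_def)

lemma tmul_sup_right: "tmul S a (sup b c) = sup (tmul S a b) (tmul S a c)"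
  using tmul_Sup_right [of a "{b, c}"] by simp

lemma tmul_sup_left: "tmul S (sup a b) c = sup (tmul S a c) (tmul S b c)"
  using tmul_Sup_left [of "{a, b}" c] by simp

lemma tmul_bot_right [simp]: "tmul S a bot = bot"
  using tmul_Sup_right [of a "{}"] by simp

lemma tmul_bot_left [simp]: "tmul S bot a = bot"
  using tmul_Sup_left [of "{}" a] by simp

lemma tnab_Sup: "tnab S (Sup X) = Sup (tnab S ` X)"
  using nc_spacetime by (simp add: nc_spacetime_def)

lemma tnab_unit_le: "tnab S (tunit S) \<le> tunit S"
  using nc_spacetime by (simp add: nc_spacetime_def)

lemma tnab_tmul_le: "tnab S (tmul S a b) \<le> tmul S (tnab S a) (tnab S b)"
  using nc_spacetime by (simp add: nc_spacetime_def)

lemma tnab_mono: "a \<le> b \<Longrightarrow> tnab S a \<le> tnab S b"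
  using tnab_Sup [of "{a, b}"] by (simp add: sup_absorb2) (metis sup_ge1)

lemma le_st_imp_iff: "b \<le> st_imp S a c \<longleftrightarrow> tmul S a (tnab S b) \<le> c"
proof
  assume "b \<le> st_imp S a c"
  then have "tmul S a (tnab S b) \<le> tmul S a (tnab S (st_imp S a c))"
    by (simp add: tmul_mono tnab_mono)
  also have "\<dots> \<le> c"
    unfolding st_imp_def tnab_Sup tmul_Sup_right by (auto intro: Sup_least)
  finally show "tmul S a (tnab S b) \<le> c" .
qed (auto simp: st_imp_def intro: Sup_upper)

lemma tprod_append: "tprod S (xs @ ys) = tmul S (tprod S xs) (tprod S ys)"
  by (induction xs) (simp_all add: tmul_assoc)

lemma tprod_in_context:
  "tprod S (P @ xs @ T) = tmul S (tprod S P) (tmul S (tprod S xs) (tprod S T))"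
  by (simp add: tprod_append)

lemma tprod_cut_le:
  "tprod S xs \<le> b \<Longrightarrow> tprod S (P @ xs @ T) \<le> tprod S (P @ [b] @ T)"
  unfolding tprod_in_context by (simp add: tmul_mono)

lemma tprod_sup_in_context:
  "tprod S (P @ [sup a b] @ T) = sup (tprod S (P @ [a] @ T)) (tprod S (P @ [b] @ T))"
  by (simp add: tprod_append tmul_sup_left tmul_sup_right)

lemma tprod_bot_in_context: "tprod S (P @ [bot] @ T) = bot"
  by (simp add: tprod_append)

lemma tprod_tmul_in_context:
  "tprod S (P @ [tmul S a b] @ T) = tprod S (P @ [a, b] @ T)"
  by (simp add: tprod_append tmul_assoc)

lemma tprod_unit_in_context: "tprod S (P @ [tunit S] @ T) = tprod S (P @ T)"
  by (simp add: tprod_append)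

lemma tnab_tprod_le: "tnab S (tprod S xs) \<le> tprod S (map (tnab S) xs)"
proof (induction xs)
  case Nil
  show ?case using tnab_unit_le by simp
next
  case (Cons x xs)
  have "tnab S (tprod S (x # xs)) \<le> tmul S (tnab S x) (tnab S (tprod S xs))"
    using tnab_tmul_le by simp
  also have "\<dots> \<le> tprod S (map (tnab S) (x # xs))"
    using Cons by (simp add: tmul_mono)
  finally show ?case .
qed

lemma tnab_tprod_eq:
  assumes "sat SN S"
  shows "tnab S (tprod S xs) = tprod S (map (tnab S) xs)"
  using assms by (induction xs) simp_all

lemma deriv_sound:
  assumes "deriv R i G A" and "\<forall>r\<in>R. sat r S" and "i \<Longrightarrow> locale_q S"
  shows "tprod S (map (eval S v) G) \<le> eval S v A"
  using assms
proof (induction rule: deriv.induct)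
  case ax_nabone
  then show ?case using tnab_unit_le by simp
next
  case (ax_bot G T A)
  then show ?case using tprod_bot_in_context by simp
next
  case (cut G A P T B)
  then show ?case using tprod_cut_le [of "map (eval S v) G"] by (simp, meson order_trans)
next
  case (L_conj1 G A T C B)
  then show ?case
    using tprod_cut_le [of "[inf (eval S v A) (eval S v B)]" "eval S v A"]
    by (simp, meson order_trans)
next
  case (L_conj2 G B T C A)
  then show ?case
    using tprod_cut_le [of "[inf (eval S v A) (eval S v B)]" "eval S v B"]
    by (simp, meson order_trans)
next
  case (L_disj G A T C B)
  then show ?case using tprod_sup_in_context by simp
next
  case (R_disj1 G A B)
  then show ?case by (simp add: le_supI1)
next
  case (R_disj2 G B A)
  then show ?case by (simp add: le_supI2)
next
  case (L_one G T A)
  then show ?case using tprod_unit_in_context by simp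
next
  case (L_tens G A B T C)
  then show ?case using tprod_tmul_in_context by simp
next
  case (R_tens G A T B)
  then show ?case by (simp add: tprod_append tmul_mono)
next
  case (nab A B)
  then show ?case by (simp add: tnab_mono)
next
  case (oplax A B C)
  then show ?case using tnab_tmul_le [of "eval S v A" "eval S v B"] by simp
next
  case (L_imp G A P B T C)
  let ?x = "tnab S (st_imp S (eval S v A) (eval S v B))"
  have "tprod S (map (eval S v) (G @ [Nab (Imp A B)])) = tmul S (tprod S (map (eval S v) G)) ?x"
    by (simp add: tprod_append)
  also have "\<dots> \<le> tmul S (eval S v A) ?x"
    using L_imp by (simp add: tmul_mono)
  also have "\<dots> \<le> eval S v B"
    using le_st_imp_iff by blast
  finally show ?case
    using L_imp tprod_cut_le [of "map (eval S v) (G @ [Nab (Imp A B)])"]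
    by (simp, meson order_trans)
next
  case (R_imp A G B)
  have "tmul S (eval S v A) (tnab S (tprod S (map (eval S v) G)))
      \<le> tmul S (eval S v A) (tprod S (map (eval S v) (map Nab G)))"
    using tnab_tprod_le [of "map (eval S v) G"] by (simp add: tmul_mono comp_def)
  also have "\<dots> \<le> eval S v B"
    using R_imp by simp
  finally show ?case by (simp add: le_st_imp_iff)
next
  case (rN G A)
  then have "sat SN S" by blast
  have "tnab S (tprod S (map (eval S v) G)) \<le> tnab S (eval S v A)"
    using rN by (simp add: tnab_mono)
  then show ?case
    using tnab_tprod_eq [OF \<open>sat SN S\<close>, of "map (eval S v) G"] by (simp add: comp_def)
next
  case (rP G A)
  then show ?case by (metis sat.simps(3) eval.simps(9) order_trans)
next
  case (rF G A)
  then show ?case by (metis sat.simps(4) eval.simps(9) order_trans)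
next
  case (rwF A)
  then have "sat SwF S" by blast
  with rwF show ?case by (simp add: bot_unique)
next
  case (rH G ps C)
  then have H: "sat SH S" by blast
  then have N: "sat SN S" by simp
  have evals: "map (eval S v) (map Nab G @ map (\<lambda>(a, b). Imp (Nab a) (Nab b)) ps)
      = map (tnab S) (map (eval S v) (G @ map (\<lambda>(a, b). Imp a b) ps))"
    using H by (simp add: case_prod_beta)
  have "tnab S (tprod S (map (eval S v) (G @ map (\<lambda>(a, b). Imp a b) ps)))
      \<le> tnab S (eval S v C)"
    using rH by (simp add: tnab_mono)
  then show ?case
    by (simp only: evals tnab_tprod_eq [OF N, symmetric] eval.simps)
next
  case (weak G T B A)
  then show ?case by (simp add: tprod_eq_Inf_set le_infI2)
next
  case (contr G A T B)
  then show ?case by (simp add: tprod_eq_Inf_set)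
next
  case (exch G A B T C)
  then show ?case by (simp add: tprod_eq_Inf_set insert_commute)
qed simp_all

lemma deriv_models:
  assumes "deriv R i G A" and "\<forall>r\<in>R. sat r S" and "i \<Longrightarrow> locale_q S"
  shows "models S G A"
  using deriv_sound [OF assms] by (simp add: models_def tprod_def)

end

theorem theorem7p10:
  fixes R :: "scheme set" and G :: "fm list" and A :: fm
  shows "(deriv R False G A \<longrightarrow> (\<forall>S::('a::complete_lattice) nst \<in> ST R. models S G A)) \<and>
         (deriv R True G A \<longrightarrow> (\<forall>S::('a::complete_lattice) nst \<in> iST R. models S G A))"
proof (intro conjI impI ballI)
  fix S :: "'a nst"
  assume "deriv R False G A" and "S \<in> ST R"
  then show "models S G A"
    using noncomm_spacetime.deriv_models [of S] by (simp add: ST_def noncomm_spacetime_def)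
next
  fix S :: "'a nst"
  assume "deriv R True G A" and "S \<in> iST R"
  then show "models S G A"
    using noncomm_spacetime.deriv_models [of S]
    by (simp add: iST_def spacetime_def noncomm_spacetime_def)
qed

end
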